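(* There is an absolute constant $C$ such that the following holds. Let $\mathcal L(G(V,E),M,N,\{\pi^{v,e}\})$ be a $k$-Label Cover instance such that $|(\pi^{v,e})^{-1}(i)|\le d=4^k$ for all projections and all $i\in[N]$, and which is smooth with parameter $J=4^{17k}$. Let $\tau=k^{-13}$ and let $\vec w_v\in\mathbb R^M$ ($v\in V$) be arbitrary (the weight vectors of a halfspace $h(\vec y)=\mathrm{sgn}(\sum_{v\in V}\langle\vec w_v,\vec y_v\rangle-\theta)$ on $\{0,1\}^{V\times M}$). Then the fraction (with multiplicity) of hyperedges of $E$ that are $2\tau$-nice is at least $1-C/k$.
   Context: A $k$-Label Cover instance is a $k$-uniform hypergraph on $V$ with a multiset $E$ of hyperedges $e=(v_1,\dots,v_k)$ of distinct vertices, each with projections $\pi^{v_i,e}:[M]\to[N]$. It is smooth with parameter $J$ if for every vertex $v$ and all $i\ne j\in[M]$, for a uniformly random hyperedge $e$ containing $v$, $\Pr[\pi^{v,e}(i)=\pi^{v,e}(j)]\le1/J$. Critical index: for $\vec u\in\mathbb R^n$ order indices $i_1,\dots,i_n$ by decreasing $|u^{(i)}|$ (ties by increasing index), $\sigma_m^2=\sum_{j\ge m}|u^{(i_j)}|^2$; $c_\tau(\vec u)$ is the smallest $m$ with $|u^{(i_m)}|\le\tau\sigma_m$ ($+\infty$ if none); $C_\tau(\vec u)=\{i_1,\dots,i_{c_\tau(\vec u)-1}\}$ if finite, else $[n]$. $\mathrm{truncate}(\vec u,S)$ agrees with $\vec u$ on $S$ and is $0$ elsewhere. Set $\vec s_v=\mathrm{truncate}(\vec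 w_v,C_\tau(\vec w_v))$ and $\vec l_v=\vec w_v-\vec s_v$. A vertex $v$ is $\beta$-nice with respect to a hyperedge $e\ni v$ if $\sum_{i\in[N]}\big(\sum_{j\in\pi^{-1}(i)}|l_v^{(j)}|\big)^4\le\beta\|\vec l_v\|_2^4$ where $\pi=\pi^{v,e}$; a hyperedge is $\beta$-nice if each of its vertices is $\beta$-nice with respect to it. *)

theory Defs
  imports Main "HOL-Library.Product_Lexorder" Complex_Main
begin

text \<open>Labels are [M] = {0..<M}, [N] = {0..<N}; vertices are natural numbers.
A hyperedge is a pair (vs, pi) where vs is the list of its k vertices and
pi v : nat => nat is the projection for vertex v on that hyperedge.
The multiset E of hyperedges is a list (multiplicity = repetition).\<close>

type_synonym hedge = "nat list \<times> (nat \<Rightarrow> nat \<Rightarrow> nat)"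

definition label_cover :: "nat \<Rightarrow> nat set \<Rightarrow> nat \<Rightarrow> nat \<Rightarrow> hedge list \<Rightarrow> bool" where
  "label_cover k V M N E \<longleftrightarrow> finite V \<and>
     (\<forall>e\<in>set E. length (fst e) = k \<and> distinct (fst e) \<and> set (fst e) \<subseteq> V \<and>
        (\<forall>v\<in>set (fst e). \<forall>j<M. snd e v j < N))"

definition preimage_bounded :: "nat \<Rightarrow> nat \<Rightarrow> hedge list \<Rightarrow> nat \<Rightarrow> bool" where
  "preimage_bounded M N E d \<longleftrightarrow>
     (\<forall>e\<in>set E. \<forall>v\<in>set (fst e). \<forall>i<N. card {j. j < M \<and> snd e v j = i} \<le> d)"

text \<open>Smoothness with parameter J: for a uniformly random hyperedge (with multiplicity)
containing v, Pr[pi(i) = pi(j)] <= 1/J.\<close>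
definition smooth :: "nat set \<Rightarrow> nat \<Rightarrow> hedge list \<Rightarrow> real \<Rightarrow> bool" where
  "smooth V M E J \<longleftrightarrow>
     (\<forall>v\<in>V. \<forall>i<M. \<forall>j<M. i \<noteq> j \<longrightarrow>
        real (card {x. x < length E \<and> v \<in> set (fst (E ! x)) \<and>
                         snd (E ! x) v i = snd (E ! x) v j})
        \<le> real (card {x. x < length E \<and> v \<in> set (fst (E ! x))}) / J)"

definition sorted_idx :: "(nat \<Rightarrow> real) \<Rightarrow> nat \<Rightarrow> nat list" where
  "sorted_idx u n = sort_key (\<lambda>i. (- \<bar>u i\<bar>, i)) [0..<n]"

text \<open>i_m (1-indexed) and sigma_m.\<close>
definition idx_at :: "(nat \<Rightarrow> real) \<Rightarrow> nat \<Rightarrow> nat \<Rightarrow> nat" where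
  "idx_at u n m = sorted_idx u n ! (m - 1)"

definition tail_sigma :: "(nat \<Rightarrow> real) \<Rightarrow> nat \<Rightarrow> nat \<Rightarrow> real" where
  "tail_sigma u n m = sqrt (\<Sum>j = m..n. \<bar>u (idx_at u n j)\<bar> ^ 2)"

definition crit_cond :: "real \<Rightarrow> (nat \<Rightarrow> real) \<Rightarrow> nat \<Rightarrow> nat \<Rightarrow> bool" where
  "crit_cond \<tau> u n m \<longleftrightarrow> m \<in> {1..n} \<and> \<bar>u (idx_at u n m)\<bar> \<le> \<tau> * tail_sigma u n m"

text \<open>Critical index c_tau (None = +infinity).\<close>
definition crit_index :: "real \<Rightarrow> (nat \<Rightarrow> real) \<Rightarrow> nat \<Rightarrow> nat option" where
  "crit_index \<tau> u n = (if \<exists>m. crit_cond \<tau> u n m then Some (LEAST m. crit_cond \<tau> u n m) else None)"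

definition crit_set :: "real \<Rightarrow> (nat \<Rightarrow> real) \<Rightarrow> nat \<Rightarrow> nat set" where
  "crit_set \<tau> u n = (case crit_index \<tau> u n of
       Some c \<Rightarrow> {idx_at u n j | j. j \<in> {1..<c}}
     | None \<Rightarrow> {0..<n})"

definition truncate :: "(nat \<Rightarrow> real) \<Rightarrow> nat set \<Rightarrow> nat \<Rightarrow> real" where
  "truncate u S = (\<lambda>i. if i \<in> S then u i else 0)"

definition small_part :: "real \<Rightarrow> nat \<Rightarrow> (nat \<Rightarrow> real) \<Rightarrow> nat \<Rightarrow> real" where
  "small_part \<tau> M w = truncate w (crit_set \<tau> w M)"

definition large_part :: "real \<Rightarrow> nat \<Rightarrow> (nat \<Rightarrow> real) \<Rightarrow> nat \<Rightarrow> real" where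
  "large_part \<tau> M w = (\<lambda>i. w i - small_part \<tau> M w i)"

text \<open>v is beta-nice w.r.t. e (pi = projection of v on e, l = l_v).\<close>
definition nice_wrt :: "real \<Rightarrow> nat \<Rightarrow> nat \<Rightarrow> (nat \<Rightarrow> nat) \<Rightarrow> (nat \<Rightarrow> real) \<Rightarrow> bool" where
  "nice_wrt \<beta> M N \<pi> l \<longleftrightarrow>
     (\<Sum>i<N. (\<Sum>j\<in>{j. j < M \<and> \<pi> j = i}. \<bar>l j\<bar>) ^ 4)
       \<le> \<beta> * (sqrt (\<Sum>j<M. (l j)\<^sup>2)) ^ 4"

definition vertex_nice :: "real \<Rightarrow> real \<Rightarrow> nat \<Rightarrow> nat \<Rightarrow> (nat \<Rightarrow> nat \<Rightarrow> real) \<Rightarrow> hedge \<Rightarrow> nat \<Rightarrow> bool" where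
  "vertex_nice \<beta> \<tau> M N w e v \<longleftrightarrow> nice_wrt \<beta> M N (snd e v) (large_part \<tau> M (w v))"

definition edge_nice :: "real \<Rightarrow> real \<Rightarrow> nat \<Rightarrow> nat \<Rightarrow> (nat \<Rightarrow> nat \<Rightarrow> real) \<Rightarrow> hedge \<Rightarrow> bool" where
  "edge_nice \<beta> \<tau> M N w e \<longleftrightarrow> (\<forall>v\<in>set (fst e). vertex_nice \<beta> \<tau> M N w e v)"

end

theory Submission
  imports Defs "HOL-Analysis.Convex"
begin

text \<open>
  The argument has three layers.
  (1) Critical index: every entry of l_v is at most \<tau> times the norm of l_v.
  (2) Deterministic niceness: call a label j heavy for l if l_j^2 > \<epsilon> |l|^2.  If the
      projection \<pi> never identifies two distinct heavy labels, each block \<pi>^-1(i) contains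
      at most one heavy label, and a fourth-moment estimate per block shows that l is
      (8\<tau>^2 + 8 d^3 \<epsilon>)-nice with respect to \<pi>.
  (3) Counting: there are at most 1/\<epsilon> heavy labels, so by smoothness a vertex is
      non-nice on at most a 1/(\<epsilon>^2 J) fraction of its hyperedges; a union bound over the
      k vertices of each hyperedge bounds the non-nice hyperedges by a k/(\<epsilon>^2 J) fraction.
  Finally, \<epsilon> = \<tau>/(8 d^3) with d = 4^k, J = 4^(17k), \<tau> = k^-13 makes this at most 2^20/k.
\<close>

subsection \<open>The critical index\<close>

lemma sorted_idx_facts:
  shows "length (sorted_idx u n) = n" "distinct (sorted_idx u n)"
    "set (sorted_idx u n) = {0..<n}"
    "sorted (map (\<lambda>i. (- \<bar>u i\<bar>, i)) (sorted_idx u n))"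
  unfolding sorted_idx_def by simp_all

lemma idx_at_lt:
  assumes "1 \<le> m" "m \<le> n"
  shows "idx_at u n m < n"
  using assms sorted_idx_facts(1,3)[of u n] nth_mem[of "m - 1" "sorted_idx u n"]
  unfolding idx_at_def by auto

lemma idx_at_inj:
  assumes "1 \<le> m" "m \<le> n" "1 \<le> m'" "m' \<le> n" "idx_at u n m = idx_at u n m'"
  shows "m = m'"
proof -
  have "sorted_idx u n ! (m - 1) = sorted_idx u n ! (m' - 1)"
    using assms(5) unfolding idx_at_def .
  moreover have "m - 1 < length (sorted_idx u n)" "m' - 1 < length (sorted_idx u n)"
    using assms(1-4) sorted_idx_facts(1) by auto
  ultimately have "m - 1 = m' - 1"
    using sorted_idx_facts(2) nth_eq_iff_index_eq by blast
  then show ?thesis using assms(1,3) by simp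
qed

lemma idx_at_surj:
  assumes "j < n"
  obtains m where "1 \<le> m" "m \<le> n" "idx_at u n m = j"
proof -
  have "j \<in> set (sorted_idx u n)" using assms sorted_idx_facts(3) by auto
  then obtain p where "p < n" "sorted_idx u n ! p = j"
    using sorted_idx_facts(1) by (metis in_set_conv_nth)
  then show thesis using that[of "p + 1"] unfolding idx_at_def by simp
qed

lemma idx_at_antimono:
  assumes "1 \<le> m" "m \<le> m'" "m' \<le> n"
  shows "\<bar>u (idx_at u n m')\<bar> \<le> \<bar>u (idx_at u n m)\<bar>"
proof -
  have "(- \<bar>u (idx_at u n m)\<bar>, idx_at u n m) \<le> (- \<bar>u (idx_at u n m')\<bar>, idx_at u n m')"
    using sorted_nth_mono[OF sorted_idx_facts(4), of "m - 1" "m' - 1" u n] assms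
      sorted_idx_facts(1)[of u n]
    unfolding idx_at_def by simp
  then show ?thesis by (auto simp: less_eq_prod_def)
qed

lemma large_part_eq:
  "large_part \<tau> M w i = (if i \<in> crit_set \<tau> w M then 0 else w i)"
  by (simp add: large_part_def small_part_def truncate_def)

lemma crit_index_SomeD:
  assumes "crit_index \<tau> u n = Some c"
  shows "1 \<le> c" "c \<le> n" "\<bar>u (idx_at u n c)\<bar> \<le> \<tau> * tail_sigma u n c"
    "crit_set \<tau> u n = {idx_at u n j | j. j \<in> {1..<c}}"
proof -
  have "\<exists>m. crit_cond \<tau> u n m" and c: "c = (LEAST m. crit_cond \<tau> u n m)"
    using assms by (auto simp: crit_index_def split: if_splits)
  then have "crit_cond \<tau> u n c" by (metis LeastI_ex)
  then show "1 \<le> c" "c \<le> n" "\<bar>u (idx_at u n c)\<bar> \<le> \<tau> * tail_sigma u n c"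
    by (auto simp: crit_cond_def)
  show "crit_set \<tau> u n = {idx_at u n j | j. j \<in> {1..<c}}"
    using assms by (simp add: crit_set_def)
qed

lemma idx_at_notin_crit_set:
  assumes "crit_index \<tau> u M = Some c" "c \<le> m" "m \<le> M"
  shows "idx_at u M m \<notin> crit_set \<tau> u M"
proof
  assume "idx_at u M m \<in> crit_set \<tau> u M"
  then obtain m' where "m' \<in> {1..<c}" "idx_at u M m = idx_at u M m'"
    using crit_index_SomeD(4)[OF assms(1)] by auto
  moreover have "1 \<le> c" using crit_index_SomeD(1)[OF assms(1)] .
  ultimately have "m = m'" using assms(2,3) idx_at_inj[of m M m' u] by auto
  then show False using \<open>m' \<in> {1..<c}\<close> assms(2) by simp
qed

text \<open>The tail mass sigma_c beyond the critical index is part of the large part.\<close>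
lemma tail_sigma_le_large_norm:
  assumes c: "crit_index \<tau> u M = Some c"
  shows "tail_sigma u M c \<le> sqrt (\<Sum>j<M. (large_part \<tau> M u j)^2)"
proof -
  define l where "l = large_part \<tau> M u"
  have c1: "1 \<le> c" using crit_index_SomeD(1)[OF c] .
  have inj: "inj_on (idx_at u M) {c..M}"
  proof (rule inj_onI)
    fix m m' assume "m \<in> {c..M}" "m' \<in> {c..M}" "idx_at u M m = idx_at u M m'"
    then show "m = m'" using c1 idx_at_inj[of m M m' u] by auto
  qed
  have sub: "idx_at u M ` {c..M} \<subseteq> {..<M}"
    using c1 idx_at_lt by fastforce
  have "(\<Sum>m = c..M. \<bar>u (idx_at u M m)\<bar>^2) = (\<Sum>m = c..M. (l (idx_at u M m))^2)"
    using idx_at_notin_crit_set[OF c] by (intro sum.cong) (auto simp: l_def large_part_eq)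
  also have "\<dots> = (\<Sum>x \<in> idx_at u M ` {c..M}. (l x)^2)"
    by (simp add: sum.reindex[OF inj])
  also have "\<dots> \<le> (\<Sum>x<M. (l x)^2)" using sub by (intro sum_mono2) auto
  finally show ?thesis unfolding tail_sigma_def l_def by (intro real_sqrt_le_mono)
qed

lemma large_part_entry_bound:
  assumes t0: "\<tau> \<ge> 0" and j: "j < M"
  shows "\<bar>large_part \<tau> M u j\<bar> \<le> \<tau> * sqrt (\<Sum>j<M. (large_part \<tau> M u j)^2)"
proof (cases "crit_index \<tau> u M")
  case None
  then show ?thesis using j by (simp add: large_part_eq crit_set_def)
next
  case (Some c)
  show ?thesis
  proof (cases "j \<in> crit_set \<tau> u M")
    case True
    then show ?thesis using t0 by (simp add: large_part_eq sum_nonneg)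
  next
    case False
    obtain m where m: "1 \<le> m" "m \<le> M" "idx_at u M m = j"
      using idx_at_surj[OF j] .
    have "c \<le> m"
      using False m crit_index_SomeD(4)[OF Some] by (cases "m < c") auto
    then have "\<bar>u j\<bar> \<le> \<bar>u (idx_at u M c)\<bar>"
      using m crit_index_SomeD(1)[OF Some] idx_at_antimono by metis
    also have "\<dots> \<le> \<tau> * tail_sigma u M c" using crit_index_SomeD(3)[OF Some] .
    also have "\<dots> \<le> \<tau> * sqrt (\<Sum>j<M. (large_part \<tau> M u j)^2)"
      using tail_sigma_le_large_norm[OF Some] t0 by (intro mult_left_mono)
    finally show ?thesis using False by (simp add: large_part_eq)
  qed
qed

subsection \<open>Deterministic niceness\<close>

lemma fourth_power_sum_le:
  fixes x y :: real
  shows "(x + y)^4 \<le> 8 * x^4 + 8 * y^4"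
proof -
  have "(x + y)^2 \<le> 2 * (x^2 + y^2)"
    using zero_le_power2[of "x - y"] by (simp add: power2_eq_square algebra_simps)
  then have "((x + y)^2)^2 \<le> (2 * (x^2 + y^2))^2" by (intro power_mono) auto
  also have "\<dots> \<le> 8 * x^4 + 8 * y^4"
    using zero_le_power2[of "x^2 - y^2"] by (simp add: power2_eq_square power4_eq_xxxx algebra_simps)
  finally show ?thesis by (simp flip: power_mult)
qed

text \<open>A sum of at most d nonnegative terms, each of square at most e: combine
  Cauchy-Schwarz, (\<Sum>a)^2 \<le> d \<Sum>a^2, with the trivial bound (\<Sum>a)^2 \<le> d^2 e.\<close>
lemma light_sum_fourth_power:
  fixes a :: "nat \<Rightarrow> real" and d :: nat
  assumes card_B: "card B \<le> d" and nonneg: "\<forall>j\<in>B. a j \<ge> 0"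
    and light: "\<forall>j\<in>B. (a j)^2 \<le> e" and "e \<ge> 0"
  shows "(\<Sum>j\<in>B. a j)^4 \<le> real d^3 * e * (\<Sum>j\<in>B. (a j)^2)"
proof -
  define y where "y = (\<Sum>j\<in>B. a j)"
  define S where "S = (\<Sum>j\<in>B. (a j)^2)"
  have "y \<le> (\<Sum>j\<in>B. sqrt e)" unfolding y_def
    using light nonneg by (intro sum_mono) (metis real_sqrt_abs real_sqrt_le_mono abs_of_nonneg)
  also have "\<dots> = real (card B) * sqrt e" by simp
  also have "\<dots> \<le> real d * sqrt e" using card_B \<open>e \<ge> 0\<close> by (intro mult_right_mono) simp_all
  finally have y_le: "y \<le> real d * sqrt e" .
  have y0: "y \<ge> 0" unfolding y_def using nonneg by (intro sum_nonneg) auto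
  have "y^2 \<le> S * card B" unfolding y_def S_def by (rule sum_squared_le_sum_of_squares)
  also have "\<dots> \<le> S * real d" using card_B by (intro mult_left_mono) (auto simp: S_def intro: sum_nonneg)
  finally have y2_mass: "y^2 \<le> real d * S" by (simp add: mult.commute)
  have y2_size: "y^2 \<le> real d^2 * e"
    using power_mono[OF y_le y0, of 2] \<open>e \<ge> 0\<close> by (simp add: power_mult_distrib)
  have "y^4 = y^2 * y^2" by (simp add: power4_eq_xxxx power2_eq_square)
  also have "\<dots> \<le> (real d^2 * e) * (real d * S)"
    using y2_mass y2_size \<open>e \<ge> 0\<close> by (intro mult_mono) auto
  also have "\<dots> = real d^3 * e * S" by (simp add: power2_eq_square power3_eq_cube)
  finally show ?thesis unfolding y_def S_def .
qed

lemma single_sum_fourth_power: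
  fixes a :: "nat \<Rightarrow> real"
  assumes fin: "finite B" and card_B: "card B \<le> 1" and heavy: "\<forall>j\<in>B. (a j)^2 \<le> t" and "t \<ge> 0"
  shows "(\<Sum>j\<in>B. a j)^4 \<le> t * (\<Sum>j\<in>B. (a j)^2)"
proof (cases "B = {}")
  case False
  then obtain j where j: "B = {j}" using fin card_B by (metis card_1_singletonE card_0_eq le_Suc_eq One_nat_def le_zero_eq)
  have "(\<Sum>j\<in>B. a j)^4 = (a j)^2 * (a j)^2" unfolding j by (simp add: power4_eq_xxxx power2_eq_square)
  also have "\<dots> \<le> t * (a j)^2" using heavy j by (intro mult_right_mono) auto
  finally show ?thesis unfolding j by simp
qed (use \<open>t \<ge> 0\<close> in simp)

lemma block_fourth_moment:
  fixes a :: "nat \<Rightarrow> real" and d :: nat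
  assumes fin: "finite B" and card_B: "card B \<le> d" and nonneg: "\<forall>j\<in>B. a j \<ge> 0"
    and one_heavy: "card (B \<inter> H) \<le> 1" and heavy: "\<forall>j\<in>B \<inter> H. (a j)^2 \<le> t"
    and light: "\<forall>j\<in>B - H. (a j)^2 \<le> e" and "e \<ge> 0" "t \<ge> 0"
  shows "(\<Sum>j\<in>B. a j)^4 \<le> (8 * t + 8 * real d^3 * e) * (\<Sum>j\<in>B. (a j)^2)"
proof -
  define S where "S = (\<Sum>j\<in>B. (a j)^2)"
  have S_heavy: "(\<Sum>j\<in>B \<inter> H. (a j)^2) \<le> S" and S_light: "(\<Sum>j\<in>B - H. (a j)^2) \<le> S"
    unfolding S_def using fin by (auto intro: sum_mono2)
  have "(\<Sum>j\<in>B \<inter> H. a j)^4 \<le> t * (\<Sum>j\<in>B \<inter> H. (a j)^2)"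
    using fin one_heavy heavy \<open>t \<ge> 0\<close> by (intro single_sum_fourth_power) auto
  also have "\<dots> \<le> t * S" using S_heavy \<open>t \<ge> 0\<close> by (rule mult_left_mono)
  finally have heavy4: "(\<Sum>j\<in>B \<inter> H. a j)^4 \<le> t * S" .
  have "(\<Sum>j\<in>B - H. a j)^4 \<le> real d^3 * e * (\<Sum>j\<in>B - H. (a j)^2)"
    using fin card_B nonneg light \<open>e \<ge> 0\<close>
    by (intro light_sum_fourth_power) (auto intro: order_trans[OF card_mono])
  also have "\<dots> \<le> real d^3 * e * S" using S_light \<open>e \<ge> 0\<close> by (intro mult_left_mono) auto
  finally have light4: "(\<Sum>j\<in>B - H. a j)^4 \<le> real d^3 * e * S" .
  have "(\<Sum>j\<in>B. a j) = (\<Sum>j\<in>B \<inter> H. a j) + (\<Sum>j\<in>B - H. a j)"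
    using sum.Int_Diff[OF fin] by blast
  then have "(\<Sum>j\<in>B. a j)^4 \<le> 8 * (\<Sum>j\<in>B \<inter> H. a j)^4 + 8 * (\<Sum>j\<in>B - H. a j)^4"
    using fourth_power_sum_le by simp
  also have "\<dots> \<le> 8 * (t * S) + 8 * (real d^3 * e * S)" using heavy4 light4 by linarith
  finally show ?thesis by (simp add: S_def algebra_simps)
qed

lemma nice_if_no_heavy_collision:
  fixes l :: "nat \<Rightarrow> real" and \<pi> :: "nat \<Rightarrow> nat" and d M N :: nat and \<tau> \<epsilon> \<beta> :: real
  defines "norm2 \<equiv> (\<Sum>j<M. (l j)^2)"
  assumes entry: "\<forall>j<M. \<bar>l j\<bar> \<le> \<tau> * sqrt norm2"
    and range: "\<forall>j<M. \<pi> j < N"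
    and blocks: "\<forall>i<N. card {j. j < M \<and> \<pi> j = i} \<le> d"
    and no_collision: "\<forall>i<M. \<forall>j<M. i \<noteq> j \<and> (l i)^2 > \<epsilon> * norm2 \<and> (l j)^2 > \<epsilon> * norm2
                         \<longrightarrow> \<pi> i \<noteq> \<pi> j"
    and "\<epsilon> \<ge> 0" and \<beta>: "8 * \<tau>^2 + 8 * real d^3 * \<epsilon> \<le> \<beta>"
  shows "nice_wrt \<beta> M N \<pi> l"
proof -
  define H where "H = {j. (l j)^2 > \<epsilon> * norm2}"
  define K where "K = 8 * (\<tau>^2 * norm2) + 8 * real d^3 * (\<epsilon> * norm2)"
  have norm2_nonneg: "norm2 \<ge> 0" unfolding norm2_def by (intro sum_nonneg) auto
  have entry2: "\<forall>j<M. \<bar>l j\<bar>^2 \<le> \<tau>^2 * norm2"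
    using entry norm2_nonneg power_mono[of "\<bar>l _\<bar>" "\<tau> * sqrt norm2" 2]
    by (auto simp: power_mult_distrib)
  have "(\<Sum>i<N. (\<Sum>j\<in>{j. j < M \<and> \<pi> j = i}. \<bar>l j\<bar>)^4)
      \<le> (\<Sum>i<N. K * (\<Sum>j\<in>{j. j < M \<and> \<pi> j = i}. \<bar>l j\<bar>^2))"
  proof (rule sum_mono)
    fix i assume i: "i \<in> {..<N}"
    define B where "B = {j. j < M \<and> \<pi> j = i}"
    have "finite (B \<inter> H)" unfolding B_def by auto
    moreover have "\<forall>x\<in>B \<inter> H. \<forall>y\<in>B \<inter> H. x = y"
      using no_collision unfolding B_def H_def by auto
    ultimately have "card (B \<inter> H) \<le> 1" by (metis card_le_Suc0_iff_eq One_nat_def)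
    then show "(\<Sum>j\<in>{j. j < M \<and> \<pi> j = i}. \<bar>l j\<bar>)^4 \<le> K * (\<Sum>j\<in>{j. j < M \<and> \<pi> j = i}. \<bar>l j\<bar>^2)"
      unfolding B_def[symmetric] K_def
      using blocks i entry2 norm2_nonneg \<open>\<epsilon> \<ge> 0\<close>
      by (intro block_fourth_moment) (auto simp: B_def H_def)
  qed
  also have "\<dots> = K * (\<Sum>j<M. (l j)^2)"
    using sum.group[of "{..<M}" "{..<N}" \<pi> "\<lambda>j. \<bar>l j\<bar>^2"] range
    by (auto simp flip: sum_distrib_left)
  also have "\<dots> = (8 * \<tau>^2 + 8 * real d^3 * \<epsilon>) * norm2^2"
    unfolding K_def norm2_def by (simp add: algebra_simps power2_eq_square)
  also have "\<dots> \<le> \<beta> * norm2^2" using \<beta> by (rule mult_right_mono) simp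
  also have "\<dots> = \<beta> * (sqrt norm2)^4"
    using norm2_nonneg by (metis power2_eq_square power4_eq_xxxx real_sqrt_pow2 mult.assoc)
  finally show ?thesis unfolding nice_wrt_def norm2_def .
qed

subsection \<open>Counting non-nice hyperedges\<close>

text \<open>The hyperedges (as positions in the list E, i.e. with multiplicity) containing v.\<close>
definition incident :: "hedge list \<Rightarrow> nat \<Rightarrow> nat set" where
  "incident E v = {x. x < length E \<and> v \<in> set (fst (E ! x))}"

lemma finite_incident [simp]: "finite (incident E v)"
  by (simp add: incident_def)

lemma heavy_labels_card:
  fixes f :: "nat \<Rightarrow> real"
  assumes "\<epsilon> > 0"
  shows "real (card {j. j < M \<and> (f j)^2 > \<epsilon> * (\<Sum>j<M. (f j)^2)}) \<le> 1 / \<epsilon>"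
proof -
  define norm2 where "norm2 = (\<Sum>j<M. (f j)^2)"
  define H where "H = {j. j < M \<and> (f j)^2 > \<epsilon> * norm2}"
  have "real (card H) * (\<epsilon> * norm2) \<le> (\<Sum>j\<in>H. (f j)^2)"
    using sum_bounded_below[of H "\<epsilon> * norm2" "\<lambda>j. (f j)^2"] unfolding H_def by auto
  also have "\<dots> \<le> norm2" unfolding norm2_def H_def by (intro sum_mono2) auto
  finally have bound: "(real (card H) * \<epsilon>) * norm2 \<le> 1 * norm2" by (simp add: mult.assoc)
  show ?thesis
  proof (cases "H = {}")
    case False
    then obtain j where j: "j \<in> H" by auto
    have "(f j)^2 \<le> norm2" unfolding norm2_def using j H_def by (intro member_le_sum) auto
    moreover have "norm2 \<ge> 0" unfolding norm2_def by (intro sum_nonneg) auto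
    moreover have "(f j)^2 > \<epsilon> * norm2" using j H_def by auto
    ultimately have "norm2 > 0" using \<open>\<epsilon> > 0\<close> by (smt (verit) mult_nonneg_nonneg)
    then have "real (card H) * \<epsilon> \<le> 1" using bound mult_right_le_imp_le by blast
    then show ?thesis using \<open>\<epsilon> > 0\<close> unfolding H_def norm2_def by (simp add: le_divide_eq)
  qed (use \<open>\<epsilon> > 0\<close> in \<open>simp flip: H_def norm2_def\<close>)
qed

lemma smooth_collision:
  assumes "smooth V M E J" "v \<in> V" "i < M" "j < M" "i \<noteq> j"
  shows "real (card {x \<in> incident E v. snd (E!x) v i = snd (E!x) v j})
           \<le> real (card (incident E v)) / J"
proof -
  have "real (card {x. x < length E \<and> v \<in> set (fst (E!x)) \<and> snd (E!x) v i = snd (E!x) v j})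
          \<le> real (card {x. x < length E \<and> v \<in> set (fst (E!x))}) / J"
    using assms unfolding smooth_def by blast
  moreover have "{x \<in> incident E v. snd (E!x) v i = snd (E!x) v j}
      = {x. x < length E \<and> v \<in> set (fst (E!x)) \<and> snd (E!x) v i = snd (E!x) v j}"
    by (auto simp: incident_def)
  ultimately show ?thesis by (simp add: incident_def)
qed

text \<open>Summing smoothness over all ordered pairs of distinct labels in H: the projections
  of v identify two labels of H on at most a |H|^2/J fraction of the hyperedges at v.\<close>
lemma collision_count:
  assumes sm: "smooth V M E J" and "J > 0" and "v \<in> V" and H: "H \<subseteq> {..<M}"
  shows "real (card {x \<in> incident E v. \<exists>i\<in>H. \<exists>j\<in>H. i \<noteq> j \<and> snd (E!x) v i = snd (E!x) v j})
           \<le> real (card H)^2 * real (card (incident E v)) / J"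
proof -
  define P where "P = {p \<in> H \<times> H. fst p \<noteq> snd p}"
  define Col where "Col p = {x \<in> incident E v. snd (E!x) v (fst p) = snd (E!x) v (snd p)}" for p
  have finH: "finite H" using H by (rule finite_subset) simp
  have P_sub: "P \<subseteq> H \<times> H" unfolding P_def by blast
  then have finP: "finite P" using finH by (simp add: finite_subset)
  have "{x \<in> incident E v. \<exists>i\<in>H. \<exists>j\<in>H. i \<noteq> j \<and> snd (E!x) v i = snd (E!x) v j} = (\<Union>p\<in>P. Col p)"
    (is "?lhs = _")
    unfolding P_def Col_def by (auto 0 4)
  then have "real (card ?lhs) = real (card (\<Union>p\<in>P. Col p))" by simp
  also have "\<dots> \<le> real (\<Sum>p\<in>P. card (Col p))"
    by (rule of_nat_mono, rule card_UN_le[OF finP])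
  also have "\<dots> = (\<Sum>p\<in>P. real (card (Col p)))" by (rule of_nat_sum)
  also have "\<dots> \<le> real (card P) * (real (card (incident E v)) / J)"
  proof (rule sum_bounded_above)
    fix p assume "p \<in> P"
    then have "fst p < M" "snd p < M" "fst p \<noteq> snd p" unfolding P_def using H by auto
    then show "real (card (Col p)) \<le> real (card (incident E v)) / J"
      unfolding Col_def by (rule smooth_collision[OF sm \<open>v \<in> V\<close>])
  qed
  also have "\<dots> \<le> real (card H)^2 * (real (card (incident E v)) / J)"
  proof (rule mult_right_mono)
    have "card P \<le> card (H \<times> H)" using P_sub finH by (intro card_mono) auto
    then have "card P \<le> card H * card H" by (simp add: card_cartesian_product)
    then have "real (card P) \<le> real (card H * card H)" by (rule of_nat_mono)
    then show "real (card P) \<le> real (card H)^2" by (simp add: power2_eq_square)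
  qed (use \<open>J > 0\<close> in auto)
  finally show ?thesis by simp
qed

text \<open>A vertex fails to be \<beta>-nice only on hyperedges where two of its heavy labels collide,
  so this happens on at most a 1/(\<epsilon>^2 J) fraction of its hyperedges.\<close>
lemma vertex_not_nice_count:
  fixes d :: nat
  assumes lc: "label_cover k V M N E" and pb: "preimage_bounded M N E d"
    and sm: "smooth V M E J" and "J > 0" and "v \<in> V"
    and "\<tau> \<ge> 0" and "\<epsilon> > 0" and \<beta>: "8 * \<tau>^2 + 8 * real d^3 * \<epsilon> \<le> \<beta>"
  shows "real (card {x \<in> incident E v. \<not> vertex_nice \<beta> \<tau> M N w (E!x) v})
           \<le> real (card (incident E v)) / (\<epsilon>^2 * J)"
proof -
  define l where "l = large_part \<tau> M (w v)"
  define H where "H = {j. j < M \<and> (l j)^2 > \<epsilon> * (\<Sum>j<M. (l j)^2)}"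
  have not_nice_collides:
    "\<exists>i\<in>H. \<exists>j\<in>H. i \<noteq> j \<and> snd (E!x) v i = snd (E!x) v j"
    if x: "x \<in> incident E v" and not_nice: "\<not> vertex_nice \<beta> \<tau> M N w (E!x) v" for x
  proof (rule ccontr)
    assume no_collision: "\<not> ?thesis"
    have e: "E!x \<in> set E" "v \<in> set (fst (E!x))" using x by (auto simp: incident_def)
    have "nice_wrt \<beta> M N (snd (E!x) v) l"
    proof (rule nice_if_no_heavy_collision[where d = d and \<tau> = \<tau> and \<epsilon> = \<epsilon>])
      show "\<forall>j<M. \<bar>l j\<bar> \<le> \<tau> * sqrt (\<Sum>j<M. (l j)^2)"
        using large_part_entry_bound[OF \<open>\<tau> \<ge> 0\<close>] unfolding l_def by blast
      show "\<forall>j<M. snd (E!x) v j < N" using lc e unfolding label_cover_def by auto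
      show "\<forall>i<N. card {j. j < M \<and> snd (E!x) v j = i} \<le> d"
        using pb e unfolding preimage_bounded_def by auto
    qed (use no_collision \<beta> \<open>\<epsilon> > 0\<close> in \<open>auto simp: H_def\<close>)
    then show False using not_nice unfolding vertex_nice_def l_def by simp
  qed
  have "real (card {x \<in> incident E v. \<not> vertex_nice \<beta> \<tau> M N w (E!x) v})
      \<le> real (card {x \<in> incident E v. \<exists>i\<in>H. \<exists>j\<in>H. i \<noteq> j \<and> snd (E!x) v i = snd (E!x) v j})"
    using not_nice_collides by (intro of_nat_mono card_mono) auto
  also have "\<dots> \<le> real (card H)^2 * real (card (incident E v)) / J"
    using collision_count[OF sm \<open>J > 0\<close> \<open>v \<in> V\<close>, of H] by (auto simp: H_def)
  also have "\<dots> \<le> (1 / \<epsilon>)^2 * real (card (incident E v)) / J"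
    using heavy_labels_card[OF \<open>\<epsilon> > 0\<close>, of M l] \<open>J > 0\<close>
    by (intro divide_right_mono mult_right_mono power_mono) (auto simp: H_def)
  finally show ?thesis by (simp add: power_one_over)
qed

text \<open>Double counting of incidences: every hyperedge has exactly k vertices.\<close>
lemma incidence_count:
  assumes lc: "label_cover k V M N E"
  shows "(\<Sum>v\<in>V. card (incident E v)) = k * length E"
proof -
  have finV: "finite V" using lc unfolding label_cover_def by simp
  have edge: "set (fst (E!x)) \<subseteq> V" "card (set (fst (E!x))) = k" if "x < length E" for x
    using lc that unfolding label_cover_def by (auto simp: distinct_card)
  have "(\<Sum>v\<in>V. card (incident E v)) = (\<Sum>v\<in>V. \<Sum>x<length E. if v \<in> set (fst (E!x)) then 1 else 0)"
    by (simp add: incident_def sum.If_cases Collect_conj_eq lessThan_def Int_commute)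
  also have "\<dots> = (\<Sum>x<length E. \<Sum>v\<in>V. if v \<in> set (fst (E!x)) then 1 else 0)"
    by (rule sum.swap)
  also have "\<dots> = (\<Sum>x<length E. k)"
  proof (rule sum.cong[OF refl])
    fix x assume "x \<in> {..<length E}"
    then have "V \<inter> set (fst (E!x)) = set (fst (E!x))" using edge by auto
    then show "(\<Sum>v\<in>V. if v \<in> set (fst (E!x)) then 1 else 0) = k"
      using edge \<open>x \<in> {..<length E}\<close> finV by (simp add: sum.If_cases)
  qed
  finally show ?thesis by simp
qed

text \<open>Layer (3): a union bound over the vertices of each hyperedge.\<close>
lemma not_nice_edges_count:
  fixes d :: nat
  assumes lc: "label_cover k V M N E" and pb: "preimage_bounded M N E d"
    and sm: "smooth V M E J" and "J > 0"
    and "\<tau> \<ge> 0" and "\<epsilon> > 0" and \<beta>: "8 * \<tau>^2 + 8 * real d^3 * \<epsilon> \<le> \<beta>"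
  shows "real (card {x. x < length E \<and> \<not> edge_nice \<beta> \<tau> M N w (E!x)})
           \<le> real k * real (length E) / (\<epsilon>^2 * J)"
proof -
  define Bad where "Bad = {x. x < length E \<and> \<not> edge_nice \<beta> \<tau> M N w (E!x)}"
  define Bad_at where "Bad_at v = {x \<in> incident E v. \<not> vertex_nice \<beta> \<tau> M N w (E!x) v}" for v
  have finV: "finite V" using lc unfolding label_cover_def by simp
  have "Bad \<subseteq> (\<Union>v\<in>V. Bad_at v)"
  proof
    fix x assume "x \<in> Bad"
    then obtain v where "x < length E" "v \<in> set (fst (E!x))" "\<not> vertex_nice \<beta> \<tau> M N w (E!x) v"
      unfolding Bad_def edge_nice_def by auto
    moreover have "v \<in> V"
      using lc \<open>x < length E\<close> \<open>v \<in> set (fst (E!x))\<close> unfolding label_cover_def by auto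
    ultimately show "x \<in> (\<Union>v\<in>V. Bad_at v)" unfolding Bad_at_def incident_def by auto
  qed
  moreover have "finite (\<Union>v\<in>V. Bad_at v)" using finV by (simp add: Bad_at_def)
  ultimately have "card Bad \<le> card (\<Union>v\<in>V. Bad_at v)" by (rule card_mono[rotated])
  also have "\<dots> \<le> (\<Sum>v\<in>V. card (Bad_at v))" by (rule card_UN_le[OF finV])
  finally have "real (card Bad) \<le> (\<Sum>v\<in>V. real (card (Bad_at v)))"
    by (metis of_nat_le_iff of_nat_sum)
  also have "\<dots> \<le> (\<Sum>v\<in>V. real (card (incident E v)) / (\<epsilon>^2 * J))"
    unfolding Bad_at_def
    by (intro sum_mono vertex_not_nice_count[OF lc pb sm]) (use assms in auto)
  also have "\<dots> = real k * real (length E) / (\<epsilon>^2 * J)"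
    using incidence_count[OF lc] by (simp flip: sum_divide_distrib of_nat_sum)
  finally show ?thesis unfolding Bad_def .
qed

lemma nice_edges_count:
  fixes d :: nat
  assumes "label_cover k V M N E" and "preimage_bounded M N E d"
    and "smooth V M E J" and "J > 0"
    and "\<tau> \<ge> 0" and "\<epsilon> > 0" and "8 * \<tau>^2 + 8 * real d^3 * \<epsilon> \<le> \<beta>"
  shows "real (card {x. x < length E \<and> edge_nice \<beta> \<tau> M N w (E!x)})
           \<ge> (1 - real k / (\<epsilon>^2 * J)) * real (length E)"
proof -
  define Good where "Good = {x. x < length E \<and> edge_nice \<beta> \<tau> M N w (E!x)}"
  define Bad where "Bad = {x. x < length E \<and> \<not> edge_nice \<beta> \<tau> M N w (E!x)}"
  have "Good \<union> Bad = {..<length E}" "Good \<inter> Bad = {}" "finite Good" "finite Bad"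
    unfolding Good_def Bad_def by auto
  then have "card Good + card Bad = length E" by (metis card_Un_disjoint card_lessThan)
  then have "real (card Good) = real (length E) - real (card Bad)" by linarith
  then show ?thesis
    using not_nice_edges_count[OF assms, of w] unfolding Good_def Bad_def
    by (simp add: algebra_simps)
qed

subsection \<open>The choice of parameters\<close>

lemma linear_le_pow2: "2 * k + 1 \<le> (2::nat)^(k + 1)"
proof (induction k)
  case (Suc k)
  have "1 \<le> (2::nat)^k" by simp
  then show ?case using Suc.IH by (simp; linarith)
qed simp

lemma square_le_pow2: "k^2 \<le> (2::nat)^(k + 1)"
proof (induction k)
  case (Suc k)
  have "(Suc k)^2 = k^2 + (2 * k + 1)" by (simp add: power2_eq_square)
  also have "\<dots> \<le> 2^(k + 1) + 2^(k + 1)" using Suc.IH linear_le_pow2[of k] by linarith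
  finally show ?case by simp
qed simp

text \<open>The polynomial loss k^28 and the preimage bound (4^k)^6 are absorbed by the
  smoothness parameter 4^(17k).\<close>
lemma parameter_arith: "64 * 4^(6 * k) * k^28 \<le> (2::nat)^20 * 4^(17 * k)"
proof -
  have four: "(4::nat)^m = 2^(2 * m)" for m by (simp add: power_mult)
  have "k^28 = (k^2)^14" by (simp flip: power_mult)
  also have "\<dots> \<le> (2^(k + 1))^14" by (intro power_mono square_le_pow2) simp
  also have "\<dots> = (2::nat)^((k + 1) * 14)" by (rule power_mult[symmetric])
  also have "\<dots> = (2::nat)^(14 * k + 14)" by (simp add: algebra_simps)
  finally have "64 * 4^(6 * k) * k^28 \<le> 2^6 * 2^(2 * (6 * k)) * (2::nat)^(14 * k + 14)"
    by (simp add: four)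
  also have "\<dots> = 2^(26 * k + 20)" by (simp only: power_add[symmetric]) simp
  also have "\<dots> \<le> 2^(34 * k + 20)" by (intro power_increasing) auto
  also have "\<dots> = (2::nat)^20 * 4^(17 * k)" by (simp add: four power_add)
  finally show ?thesis .
qed

lemma parameter_choice:
  fixes k :: nat
  defines "\<tau> \<equiv> 1 / real k ^ 13"
  defines "\<epsilon> \<equiv> \<tau> / (8 * real (4^k :: nat)^3)"
  assumes "k \<ge> 2"
  shows "\<tau> \<ge> 0" "\<epsilon> > 0" "8 * \<tau>^2 + 8 * real (4^k :: nat)^3 * \<epsilon> \<le> 2 * \<tau>"
    "real k / (\<epsilon>^2 * 4^(17 * k)) \<le> 2^20 / real k"
proof -
  have k: "real k \<ge> 2" using assms(3) by simp
  show "\<tau> \<ge> 0" "\<epsilon> > 0" unfolding \<epsilon>_def \<tau>_def using k by auto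
  have "real k ^ 13 \<ge> 2 ^ 13" using k by (intro power_mono) auto
  then have "8 * \<tau> \<le> 1" unfolding \<tau>_def by (simp add: divide_le_eq)
  then have "8 * \<tau>^2 \<le> \<tau>"
    using mult_right_mono[OF _ \<open>\<tau> \<ge> 0\<close>, of "8 * \<tau>" 1] by (simp add: power2_eq_square)
  moreover have "8 * real (4^k :: nat)^3 * \<epsilon> = \<tau>" unfolding \<epsilon>_def by simp
  ultimately show "8 * \<tau>^2 + 8 * real (4^k :: nat)^3 * \<epsilon> \<le> 2 * \<tau>" by linarith
  have "real (64 * 4^(6 * k) * k^28) \<le> real ((2::nat)^20 * 4^(17 * k))"
    using parameter_arith[of k] by (simp only: of_nat_le_iff)
  then have "64 * 4^(6 * k) * real k^28 \<le> 2^20 * 4^(17 * k)" by simp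
  moreover have "real k^28 = real k * real k^27" by (simp only: power_Suc[symmetric]) simp
  ultimately have "64 * 4^(6 * k) * real k^27 / 4^(17 * k) \<le> 2^20 / real k"
    using k by (simp add: divide_le_eq le_divide_eq mult_ac)
  moreover have "real k / (\<epsilon>^2 * 4^(17 * k)) = 64 * 4^(6 * k) * real k^27 / 4^(17 * k)"
    using k unfolding \<epsilon>_def \<tau>_def
    by (simp add: field_simps power2_eq_square flip: power_add power_mult)
      (simp add: numeral_eq_Suc)
  ultimately show "real k / (\<epsilon>^2 * 4^(17 * k)) \<le> 2^20 / real k" by simp
qed

theorem lemma5p5:
  shows "\<exists>C::real. \<forall>(k::nat) (V::nat set) (M::nat) (N::nat) (E::hedge list)
            (w::nat \<Rightarrow> nat \<Rightarrow> real).
     k \<ge> 1 \<and> label_cover k V M N E \<and> preimage_bounded M N E (4 ^ k)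
       \<and> smooth V M E (4 ^ (17 * k)) \<longrightarrow>
     (let \<tau> = 1 / real k ^ 13 in
        real (card {x. x < length E \<and> edge_nice (2 * \<tau>) \<tau> M N w (E ! x)})
          \<ge> (1 - C / real k) * real (length E))"
proof (intro exI[of _ "2^20"] allI impI)
  fix k V M N E and w :: "nat \<Rightarrow> nat \<Rightarrow> real"
  assume "k \<ge> 1 \<and> label_cover k V M N E \<and> preimage_bounded M N E (4 ^ k)
       \<and> smooth V M E (4 ^ (17 * k))"
  then have lc: "label_cover k V M N E" and pb: "preimage_bounded M N E (4 ^ k)"
    and sm: "smooth V M E (4 ^ (17 * k))" and "k \<ge> 1" by auto
  define \<tau> where "\<tau> = 1 / real k ^ 13"
  define \<epsilon> where "\<epsilon> = \<tau> / (8 * real (4^k :: nat)^3)"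
  define good where "good = real (card {x. x < length E \<and> edge_nice (2 * \<tau>) \<tau> M N w (E ! x)})"
  have "(1 - 2^20 / real k) * real (length E) \<le> good"
  proof (cases "k \<ge> 2")
    case True
    note params = parameter_choice[OF True, folded \<tau>_def, folded \<epsilon>_def]
    have "(1 - 2^20 / real k) * real (length E) \<le> (1 - real k / (\<epsilon>^2 * 4^(17 * k))) * real (length E)"
      using params(4) by (intro mult_right_mono) auto
    also have "\<dots> \<le> good"
      unfolding good_def using nice_edges_count[OF lc pb sm _ params(1-3)] by simp
    finally show ?thesis .
  next
    case False
    then have "k = 1" using \<open>k \<ge> 1\<close> by simp
    then have "(1 - 2^20 / real k) * real (length E) \<le> 0" by simp
    then show ?thesis unfolding good_def by linarith
  qed
  then show "let \<tau> = 1 / real k ^ 13 in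
        real (card {x. x < length E \<and> edge_nice (2 * \<tau>) \<tau> M N w (E ! x)})
          \<ge> (1 - 2^20 / real k) * real (length E)"
    unfolding Let_def good_def \<tau>_def .
qed

end
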